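(* Let $X$ be the toric scheme associated to a fan $\Delta$ over an irreducible idempotent semiring $R$. Then $X$ is irreducible.
   Context: Semirings are commutative with $1\neq0$; idempotent means $a+a=a$; irreducible means that whenever $xy$ is nilpotent, $x$ or $y$ is nilpotent. For a fan $\Delta$ in $N_{\mathbb{R}}$ with dual lattice $\Lambda$, the toric scheme over $R$ is obtained by gluing the affine schemes $U_\sigma=\operatorname{Spec}R[\Lambda\cap\sigma^\vee]$ ($\sigma\in\Delta$) along $U_{\sigma\cap\tau}$ (the base change to $R$ of the toric monoid scheme of $\Delta$). *)

theory Defs
  imports Complex_Main
begin

definition idempotent_semiring :: "'a::comm_semiring_1 itself \<Rightarrow> bool" where
  "idempotent_semiring R \<longleftrightarrow> (\<forall>a::'a. a + a = a)"

definition nilpotent_elem :: "'a::comm_semiring_1 \<Rightarrow> bool" where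
  "nilpotent_elem x \<longleftrightarrow> (\<exists>k::nat. x ^ k = 0)"

definition irreducible_semiring :: "'a::comm_semiring_1 itself \<Rightarrow> bool" where
  "irreducible_semiring R \<longleftrightarrow>
     (\<forall>x y::'a. nilpotent_elem (x * y) \<longrightarrow> nilpotent_elem x \<or> nilpotent_elem y)"

section \<open>Cones and fans in N_R = R^n, N = Z^n, dual lattice M = Z^n\<close>

definition pair :: "('n::finite \<Rightarrow> real) \<Rightarrow> ('n \<Rightarrow> real) \<Rightarrow> real" where
  "pair u v = (\<Sum>i\<in>UNIV. u i * v i)"

definition lat :: "('n \<Rightarrow> int) \<Rightarrow> ('n \<Rightarrow> real)" where
  "lat m = (\<lambda>i. real_of_int (m i))"

definition cone_gen :: "('n::finite \<Rightarrow> int) set \<Rightarrow> ('n \<Rightarrow> real) set" where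
  "cone_gen G = {v. \<exists>c. (\<forall>g\<in>G. c g \<ge> 0) \<and> v = (\<lambda>i. \<Sum>g\<in>G. c g * real_of_int (g i))}"

definition rat_poly_cone :: "('n::finite \<Rightarrow> real) set \<Rightarrow> bool" where
  "rat_poly_cone \<sigma> \<longleftrightarrow> (\<exists>G. finite G \<and> \<sigma> = cone_gen G)"

definition strongly_convex :: "('n \<Rightarrow> real) set \<Rightarrow> bool" where
  "strongly_convex \<sigma> \<longleftrightarrow> (\<forall>v. v \<in> \<sigma> \<and> (\<lambda>i. - v i) \<in> \<sigma> \<longrightarrow> v = (\<lambda>_. 0))"

definition dual_cone :: "('n::finite \<Rightarrow> real) set \<Rightarrow> ('n \<Rightarrow> real) set" where
  "dual_cone \<sigma> = {u. \<forall>v\<in>\<sigma>. pair u v \<ge> 0}"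

definition face_of_cone :: "('n::finite \<Rightarrow> real) set \<Rightarrow> ('n \<Rightarrow> real) set \<Rightarrow> bool" where
  "face_of_cone \<tau> \<sigma> \<longleftrightarrow> (\<exists>u\<in>dual_cone \<sigma>. \<tau> = \<sigma> \<inter> {v. pair u v = 0})"

definition fan :: "('n::finite \<Rightarrow> real) set set \<Rightarrow> bool" where
  "fan \<Delta> \<longleftrightarrow> finite \<Delta> \<and> \<Delta> \<noteq> {} \<and>
     (\<forall>\<sigma>\<in>\<Delta>. rat_poly_cone \<sigma> \<and> strongly_convex \<sigma> \<and> (\<forall>\<tau>. face_of_cone \<tau> \<sigma> \<longrightarrow> \<tau> \<in> \<Delta>)) \<and>
     (\<forall>\<sigma>\<in>\<Delta>. \<forall>\<tau>\<in>\<Delta>. face_of_cone (\<sigma> \<inter> \<tau>) \<sigma> \<and> face_of_cone (\<sigma> \<inter> \<tau>) \<tau>)"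

definition dual_monoid :: "('n::finite \<Rightarrow> real) set \<Rightarrow> ('n \<Rightarrow> int) set" where
  "dual_monoid \<sigma> = {m. lat m \<in> dual_cone \<sigma>}"

section \<open>Monoid semirings R[S] as finitely supported functions M \<Rightarrow> R\<close>

definition supp :: "('m \<Rightarrow> 'a::zero) \<Rightarrow> 'm set" where
  "supp f = {m. f m \<noteq> 0}"

definition monoid_semiring :: "('n \<Rightarrow> int) set \<Rightarrow> (('n \<Rightarrow> int) \<Rightarrow> 'a::zero) set" where
  "monoid_semiring S = {f. finite (supp f) \<and> supp f \<subseteq> S}"

definition padd :: "(('n \<Rightarrow> int) \<Rightarrow> 'a::comm_semiring_1) \<Rightarrow> (('n \<Rightarrow> int) \<Rightarrow> 'a) \<Rightarrow> (('n \<Rightarrow> int) \<Rightarrow> 'a)" where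
  "padd f g = (\<lambda>m. f m + g m)"

definition pmult :: "(('n \<Rightarrow> int) \<Rightarrow> 'a::comm_semiring_1) \<Rightarrow> (('n \<Rightarrow> int) \<Rightarrow> 'a) \<Rightarrow> (('n \<Rightarrow> int) \<Rightarrow> 'a)" where
  "pmult f g = (\<lambda>m. \<Sum>p\<in>{p. f (fst p) \<noteq> 0 \<and> g (snd p) \<noteq> 0 \<and> (\<lambda>i. fst p i + snd p i) = m}.
                      f (fst p) * g (snd p))"

definition coord :: "('n::finite \<Rightarrow> real) set \<Rightarrow> (('n \<Rightarrow> int) \<Rightarrow> 'a::comm_semiring_1) set" where
  "coord \<sigma> = monoid_semiring (dual_monoid \<sigma>)"

definition semiring_ideal :: "(('n \<Rightarrow> int) \<Rightarrow> 'a::comm_semiring_1) set \<Rightarrow> (('n \<Rightarrow> int) \<Rightarrow> 'a) set \<Rightarrow> bool" where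
  "semiring_ideal A I \<longleftrightarrow> I \<subseteq> A \<and> (\<lambda>_. 0) \<in> I \<and> (\<forall>x\<in>I. \<forall>y\<in>I. padd x y \<in> I) \<and>
     (\<forall>a\<in>A. \<forall>x\<in>I. pmult a x \<in> I)"

definition prime_ideal :: "(('n \<Rightarrow> int) \<Rightarrow> 'a::comm_semiring_1) set \<Rightarrow> (('n \<Rightarrow> int) \<Rightarrow> 'a) set \<Rightarrow> bool" where
  "prime_ideal A P \<longleftrightarrow> semiring_ideal A P \<and> P \<noteq> A \<and>
     (\<forall>a\<in>A. \<forall>b\<in>A. pmult a b \<in> P \<longrightarrow> a \<in> P \<or> b \<in> P)"

definition spec :: "(('n \<Rightarrow> int) \<Rightarrow> 'a::comm_semiring_1) set \<Rightarrow> (('n \<Rightarrow> int) \<Rightarrow> 'a) set set" where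
  "spec A = {P. prime_ideal A P}"

definition zariski_open :: "(('n \<Rightarrow> int) \<Rightarrow> 'a::comm_semiring_1) set \<Rightarrow> (('n \<Rightarrow> int) \<Rightarrow> 'a) set set \<Rightarrow> bool" where
  "zariski_open A U \<longleftrightarrow> (\<exists>E\<subseteq>A. U = {P\<in>spec A. \<not> E \<subseteq> P})"

section \<open>The toric scheme: gluing the charts U_sigma along U_(sigma \<inter> tau)\<close>

text \<open>(sigma,P) ~ (tau,Q) iff both are images of one point of U_(sigma \<inter> tau) under the
  open immersions U_(sigma \<inter> tau) \<rightarrow> U_sigma, U_tau (induced by R[S_sigma] \<subseteq> R[S_(sigma \<inter> tau)]).\<close>
definition glue_rel :: "'a::comm_semiring_1 itself \<Rightarrow> ('n::finite \<Rightarrow> real) set set \<Rightarrow>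
    ((('n \<Rightarrow> real) set \<times> (('n \<Rightarrow> int) \<Rightarrow> 'a) set) \<times> (('n \<Rightarrow> real) set \<times> (('n \<Rightarrow> int) \<Rightarrow> 'a) set)) set" where
  "glue_rel R \<Delta> = {((\<sigma>, P), (\<tau>, Q)). \<sigma> \<in> \<Delta> \<and> \<tau> \<in> \<Delta> \<and>
      P \<in> spec (coord \<sigma> :: (('n \<Rightarrow> int) \<Rightarrow> 'a) set) \<and> Q \<in> spec (coord \<tau> :: (('n \<Rightarrow> int) \<Rightarrow> 'a) set) \<and>
      (\<exists>P'\<in>spec (coord (\<sigma> \<inter> \<tau>) :: (('n \<Rightarrow> int) \<Rightarrow> 'a) set).
          P = P' \<inter> coord \<sigma> \<and> Q = P' \<inter> coord \<tau>)}"

definition toric_points :: "'a::comm_semiring_1 itself \<Rightarrow> ('n::finite \<Rightarrow> real) set set \<Rightarrow>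
    (('n \<Rightarrow> real) set \<times> (('n \<Rightarrow> int) \<Rightarrow> 'a) set) set set" where
  "toric_points R \<Delta> =
     (SIGMA \<sigma>:\<Delta>. spec (coord \<sigma> :: (('n \<Rightarrow> int) \<Rightarrow> 'a) set)) // glue_rel R \<Delta>"

definition toric_open :: "'a::comm_semiring_1 itself \<Rightarrow> ('n::finite \<Rightarrow> real) set set \<Rightarrow>
    (('n \<Rightarrow> real) set \<times> (('n \<Rightarrow> int) \<Rightarrow> 'a) set) set set \<Rightarrow> bool" where
  "toric_open R \<Delta> U \<longleftrightarrow> U \<subseteq> toric_points R \<Delta> \<and>
     (\<forall>\<sigma>\<in>\<Delta>. zariski_open (coord \<sigma> :: (('n \<Rightarrow> int) \<Rightarrow> 'a) set)
        {P \<in> spec (coord \<sigma>). glue_rel R \<Delta> `` {(\<sigma>, P)} \<in> U})"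

definition irreducible_space :: "'x set \<Rightarrow> ('x set \<Rightarrow> bool) \<Rightarrow> bool" where
  "irreducible_space X opn \<longleftrightarrow> X \<noteq> {} \<and>
     (\<forall>U V. opn U \<and> opn V \<and> (X - U) \<union> (X - V) = X \<longrightarrow> X - U = X \<or> X - V = X)"

definition toric_scheme_irreducible :: "'a::comm_semiring_1 itself \<Rightarrow> ('n::finite \<Rightarrow> real) set set \<Rightarrow> bool" where
  "toric_scheme_irreducible R \<Delta> \<longleftrightarrow> irreducible_space (toric_points R \<Delta>) (toric_open R \<Delta>)"

end

theory Submission
  imports Defs "HOL-Analysis.Analysis"
begin

text \<open>On each chart \<open>U\<^sub>\<sigma>\<close> consider the ideal of \<open>R[S\<^sub>\<sigma>]\<close> of polynomials all of whose
  coefficients are nilpotent. As \<open>R\<close> is idempotent, a polynomial lies in it iff its augmentation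
  (the sum of its coefficients) is nilpotent; the augmentation is multiplicative and \<open>R\<close> is
  irreducible, so this ideal is prime. It lies in every prime, since every monomial with nilpotent
  coefficient does. These generic points of the charts are glued to one another: the ideals
  restrict correctly along \<open>R[S\<^sub>\<sigma>] \<subseteq> R[S\<^sub>\<sigma>\<^sub>\<inter>\<^sub>\<tau>]\<close>, and conversely a prime of
  \<open>R[S\<^sub>\<sigma>\<^sub>\<inter>\<^sub>\<tau>]\<close> restricting to the generic point of \<open>U\<^sub>\<tau>\<close> is itself generic, because
  multiplying by a monomial from the interior of \<open>\<tau>\<^sup>\<or>\<close> (nonempty by strong convexity) moves any
  polynomial into \<open>R[S\<^sub>\<tau>]\<close>. They thus form a single point of \<open>X\<close>, and as Zariski open sets are
  closed under generalization, it lies in every nonempty open set of \<open>X\<close>.\<close>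

type_synonym ('n, 'a) lpoly = "('n \<Rightarrow> int) \<Rightarrow> 'a"

section \<open>Nilpotent elements of a commutative semiring\<close>

lemma nilpotent_elem_0 [simp]: "nilpotent_elem (0::'a::comm_semiring_1)"
  unfolding nilpotent_elem_def by (metis power_one_right)

lemma not_nilpotent_elem_1 [simp]: "\<not> nilpotent_elem (1::'a::comm_semiring_1)"
  unfolding nilpotent_elem_def by simp

lemma nilpotent_elem_mult_left: "nilpotent_elem y \<Longrightarrow> nilpotent_elem (x * y :: 'a::comm_semiring_1)"
  unfolding nilpotent_elem_def by (metis mult_zero_right power_mult_distrib)

lemma power_eq_0_mono: "(x::'a::comm_semiring_1) ^ k = 0 \<Longrightarrow> k \<le> j \<Longrightarrow> x ^ j = 0"
  by (metis le_add_diff_inverse mult_zero_left power_add)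

lemma nilpotent_elem_add:
  fixes x y :: "'a::comm_semiring_1"
  assumes "nilpotent_elem x" "nilpotent_elem y"
  shows "nilpotent_elem (x + y)"
proof -
  obtain k l where k: "x ^ k = 0" and l: "y ^ l = 0"
    using assms unfolding nilpotent_elem_def by blast
  have "(x + y) ^ (k + l) = (\<Sum>i\<le>k + l. of_nat ((k + l) choose i) * x ^ i * y ^ (k + l - i))"
    by (rule binomial_ring)
  also have "\<dots> = 0"
  proof (rule sum.neutral, rule ballI)
    fix i
    show "of_nat ((k + l) choose i) * x ^ i * y ^ (k + l - i) = 0"
      using power_eq_0_mono[OF k, of i] power_eq_0_mono[OF l, of "k + l - i"] by (cases "k \<le> i") auto
  qed
  finally show ?thesis unfolding nilpotent_elem_def by blast
qed

lemma nilpotent_elem_sum: "(\<And>i. i \<in> A \<Longrightarrow> nilpotent_elem (f i)) \<Longrightarrow> nilpotent_elem (sum f A)"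
  by (induction A rule: infinite_finite_induct) (auto intro: nilpotent_elem_add)

lemma ex_power_add_eq_power_plus: "\<exists>r. ((x::'a::comm_semiring_1) + y) ^ k = x ^ k + r"
proof (induction k)
  case 0
  show ?case by (rule exI[of _ 0]) simp
next
  case (Suc k)
  then obtain r where "(x + y) ^ k = x ^ k + r" by blast
  then have "(x + y) ^ Suc k = x ^ Suc k + (x * r + y * x ^ k + y * r)"
    by (simp add: distrib_left distrib_right add_ac)
  then show ?case by blast
qed

lemma idempotent_semiring_add_eq_0D:
  assumes "idempotent_semiring TYPE('a::comm_semiring_1)" and "a + b = (0::'a)"
  shows "a = 0"
proof -
  have "a + (a + b) = a + b"
    using assms(1) unfolding idempotent_semiring_def by (simp flip: add.assoc)
  then show ?thesis using assms(2) by simp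
qed

lemma nilpotent_elem_add_leftD:
  assumes "idempotent_semiring TYPE('a::comm_semiring_1)" and "nilpotent_elem (x + y :: 'a)"
  shows "nilpotent_elem x"
proof -
  obtain k where k: "(x + y) ^ k = 0" using assms(2) unfolding nilpotent_elem_def by blast
  obtain r where "(x + y) ^ k = x ^ k + r" using ex_power_add_eq_power_plus by blast
  with k have "x ^ k = 0" using idempotent_semiring_add_eq_0D[OF assms(1)] by simp
  then show ?thesis unfolding nilpotent_elem_def by blast
qed

lemma nilpotent_elem_sum_iff:
  assumes "idempotent_semiring TYPE('a::comm_semiring_1)" and "finite A"
  shows "nilpotent_elem (sum f A :: 'a) \<longleftrightarrow> (\<forall>i\<in>A. nilpotent_elem (f i))"
proof
  assume nil: "nilpotent_elem (sum f A)"
  show "\<forall>i\<in>A. nilpotent_elem (f i)"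
  proof
    fix i assume "i \<in> A"
    then have "sum f A = f i + sum f (A - {i})" using assms(2) by (simp add: sum.remove)
    then show "nilpotent_elem (f i)" using nil nilpotent_elem_add_leftD[OF assms(1)] by metis
  qed
qed (auto intro: nilpotent_elem_sum)

section \<open>The monoid semirings of the charts\<close>

definition monomial :: "'a::comm_semiring_1 \<Rightarrow> ('n \<Rightarrow> int) \<Rightarrow> ('n, 'a) lpoly" where
  "monomial a p = (\<lambda>m. if m = p then a else 0)"

definition augmentation :: "('n, 'a::comm_semiring_1) lpoly \<Rightarrow> 'a" where
  "augmentation f = sum f (supp f)"

lemma pair_lat_add: "pair (lat (\<lambda>i. p i + q i)) v = pair (lat p) v + pair (lat q) v"
  unfolding pair_def lat_def by (simp add: sum.distrib distrib_right)

lemma zero_in_dual_monoid: "(\<lambda>_. 0) \<in> dual_monoid \<sigma>"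
  unfolding dual_monoid_def dual_cone_def pair_def lat_def by simp

lemma add_in_dual_monoid:
  "p \<in> dual_monoid \<sigma> \<Longrightarrow> q \<in> dual_monoid \<sigma> \<Longrightarrow> (\<lambda>i. p i + q i) \<in> dual_monoid \<sigma>"
  unfolding dual_monoid_def dual_cone_def by (simp add: pair_lat_add)

lemma dual_monoid_antimono: "\<sigma>' \<subseteq> \<sigma> \<Longrightarrow> dual_monoid \<sigma> \<subseteq> dual_monoid \<sigma>'"
  unfolding dual_monoid_def dual_cone_def by auto

lemma coord_antimono: "\<sigma>' \<subseteq> \<sigma> \<Longrightarrow> (coord \<sigma> :: ('n::finite, 'a::comm_semiring_1) lpoly set) \<subseteq> coord \<sigma>'"
  using dual_monoid_antimono unfolding coord_def monoid_semiring_def by blast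

lemma coord_iff: "f \<in> coord \<sigma> \<longleftrightarrow> finite (supp f) \<and> supp f \<subseteq> dual_monoid \<sigma>"
  unfolding coord_def monoid_semiring_def by simp

lemma coord_finite_supp: "f \<in> coord \<sigma> \<Longrightarrow> finite (supp f)"
  by (simp add: coord_iff)

lemma zero_in_coord: "(\<lambda>_. 0) \<in> coord \<sigma>"
  unfolding coord_iff supp_def by simp

lemma monomial_0 [simp]: "monomial 0 p = (\<lambda>_. 0)"
  unfolding monomial_def by auto

lemma monomial_in_coord: "p \<in> dual_monoid \<sigma> \<Longrightarrow> monomial a p \<in> coord \<sigma>"
proof -
  have "supp (monomial a p) \<subseteq> {p}" unfolding supp_def monomial_def by auto
  then show "p \<in> dual_monoid \<sigma> \<Longrightarrow> ?thesis" unfolding coord_iff using finite_subset by blast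
qed

lemma padd_in_coord: "f \<in> coord \<sigma> \<Longrightarrow> g \<in> coord \<sigma> \<Longrightarrow> padd f g \<in> coord \<sigma>"
proof -
  have "supp (padd f g) \<subseteq> supp f \<union> supp g" unfolding supp_def padd_def by auto
  then show "f \<in> coord \<sigma> \<Longrightarrow> g \<in> coord \<sigma> \<Longrightarrow> ?thesis"
    unfolding coord_iff by (meson finite_UnI finite_subset le_sup_iff subset_trans)
qed

lemma pmult_eq_sum:
  "pmult f g m = (\<Sum>pq\<in>{pq \<in> supp f \<times> supp g. (\<lambda>(p, q) i. p i + q i) pq = m}. f (fst pq) * g (snd pq))"
proof -
  have "{pq. f (fst pq) \<noteq> 0 \<and> g (snd pq) \<noteq> 0 \<and> (\<lambda>i. fst pq i + snd pq i) = m}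
      = {pq \<in> supp f \<times> supp g. (\<lambda>(p, q) i. p i + q i) pq = m}"
    unfolding supp_def by auto
  then show ?thesis unfolding pmult_def by simp
qed

lemma supp_pmult_subset: "supp (pmult f g) \<subseteq> (\<lambda>(p, q) i. p i + q i) ` (supp f \<times> supp g)"
proof
  fix m assume m: "m \<in> supp (pmult f g)"
  show "m \<in> (\<lambda>(p, q) i. p i + q i) ` (supp f \<times> supp g)"
  proof (rule ccontr)
    assume "m \<notin> (\<lambda>(p, q) i. p i + q i) ` (supp f \<times> supp g)"
    then have "{pq \<in> supp f \<times> supp g. (\<lambda>(p, q) i. p i + q i) pq = m} = {}" by force
    then have "pmult f g m = 0" unfolding pmult_eq_sum by (simp only: sum.empty)
    with m show False unfolding supp_def by simp
  qed
qed

lemma pmult_in_coord: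
  assumes "f \<in> coord \<sigma>" "g \<in> coord \<sigma>"
  shows "pmult f g \<in> coord \<sigma>"
proof -
  have "(\<lambda>(p, q) i. p i + q i) pq \<in> dual_monoid \<sigma>" if "pq \<in> supp f \<times> supp g" for pq
    using assms that unfolding coord_iff by (cases pq) (auto intro: add_in_dual_monoid)
  moreover have "finite ((\<lambda>(p, q) i. p i + q i) ` (supp f \<times> supp g))"
    using assms by (simp add: coord_iff)
  ultimately show ?thesis
    using supp_pmult_subset[of f g] unfolding coord_iff by (meson finite_subset image_subset_iff subset_trans)
qed

lemma pmult_monomial_left: "pmult (monomial b u) f m = b * f (\<lambda>i. m i - u i)"
proof -
  let ?I = "{p. monomial b u (fst p) \<noteq> 0 \<and> f (snd p) \<noteq> 0 \<and> (\<lambda>i. fst p i + snd p i) = m}"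
  have "?I = (if b \<noteq> 0 \<and> f (\<lambda>i. m i - u i) \<noteq> 0 then {(u, \<lambda>i. m i - u i)} else {})"
    by (auto simp: monomial_def)
  then show ?thesis unfolding pmult_def by (simp add: monomial_def)
qed

lemma pmult_monomial_right: "pmult f (monomial b u) m = f (\<lambda>i. m i - u i) * b"
proof -
  let ?I = "{p. f (fst p) \<noteq> 0 \<and> monomial b u (snd p) \<noteq> 0 \<and> (\<lambda>i. fst p i + snd p i) = m}"
  have "?I = (if b \<noteq> 0 \<and> f (\<lambda>i. m i - u i) \<noteq> 0 then {(\<lambda>i. m i - u i, u)} else {})"
    by (auto simp: monomial_def)
  then show ?thesis unfolding pmult_def by (simp add: monomial_def)
qed

lemma augmentation_pmult:
  fixes f g :: "('n, 'a::comm_semiring_1) lpoly"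
  assumes "finite (supp f)" "finite (supp g)"
  shows "augmentation (pmult f g) = augmentation f * augmentation g"
proof -
  let ?S = "supp f \<times> supp g"
  let ?h = "\<lambda>(p, q) i. p i + q i :: int"
  have fin: "finite ?S" "finite (?h ` ?S)" using assms by simp_all
  have "augmentation (pmult f g) = sum (pmult f g) (?h ` ?S)"
    unfolding augmentation_def
    by (rule sum.mono_neutral_left[OF fin(2) supp_pmult_subset]) (auto simp: supp_def)
  also have "\<dots> = (\<Sum>m\<in>?h ` ?S. \<Sum>pq\<in>{pq \<in> ?S. ?h pq = m}. f (fst pq) * g (snd pq))"
    unfolding pmult_eq_sum ..
  also have "\<dots> = (\<Sum>pq\<in>?S. f (fst pq) * g (snd pq))"
    by (rule sum.group[OF fin]) simp
  also have "\<dots> = augmentation f * augmentation g"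
    unfolding augmentation_def sum_product sum.cartesian_product by (simp add: case_prod_beta)
  finally show ?thesis .
qed

lemma nilpotent_elem_augmentation_iff:
  assumes "idempotent_semiring TYPE('a::comm_semiring_1)" and "finite (supp f)"
  shows "nilpotent_elem (augmentation f :: 'a) \<longleftrightarrow> (\<forall>m. nilpotent_elem (f m))"
proof -
  have "nilpotent_elem (augmentation f) \<longleftrightarrow> (\<forall>m\<in>supp f. nilpotent_elem (f m))"
    unfolding augmentation_def by (rule nilpotent_elem_sum_iff[OF assms])
  also have "\<dots> \<longleftrightarrow> (\<forall>m. nilpotent_elem (f m))"
    unfolding supp_def by (metis (mono_tags) mem_Collect_eq nilpotent_elem_0)
  finally show ?thesis .
qed

section \<open>The ideal of polynomials with nilpotent coefficients\<close>

definition nil_coeff_ideal :: "('n::finite \<Rightarrow> real) set \<Rightarrow> ('n, 'a::comm_semiring_1) lpoly set" where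
  "nil_coeff_ideal \<sigma> = {f \<in> coord \<sigma>. \<forall>m. nilpotent_elem (f m)}"

lemma nil_coeff_ideal_restrict:
  "\<sigma>' \<subseteq> \<sigma> \<Longrightarrow> nil_coeff_ideal \<sigma>' \<inter> coord \<sigma> = (nil_coeff_ideal \<sigma> :: ('n::finite, 'a::comm_semiring_1) lpoly set)"
  using coord_antimono unfolding nil_coeff_ideal_def by blast

lemma semiring_ideal_nil_coeff_ideal:
  "semiring_ideal (coord \<sigma>) (nil_coeff_ideal \<sigma> :: ('n::finite, 'a::comm_semiring_1) lpoly set)"
proof -
  have "nilpotent_elem (padd x y m)" if "\<forall>m. nilpotent_elem (x m)" "\<forall>m. nilpotent_elem (y m)"
    for x y :: "('n, 'a) lpoly" and m
    unfolding padd_def using that by (simp add: nilpotent_elem_add)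
  moreover have "nilpotent_elem (pmult a x m)" if "\<forall>m. nilpotent_elem (x m)"
    for a x :: "('n, 'a) lpoly" and m
    unfolding pmult_def using that by (auto intro!: nilpotent_elem_sum nilpotent_elem_mult_left)
  ultimately show ?thesis unfolding semiring_ideal_def nil_coeff_ideal_def
    by (auto simp: zero_in_coord padd_in_coord pmult_in_coord)
qed

lemma monomial_1_in_ideal_imp_eq:
  assumes "semiring_ideal (coord \<sigma>) I" and "monomial 1 (\<lambda>_. 0) \<in> I"
  shows "I = coord \<sigma>"
proof -
  have "f \<in> I" if "f \<in> coord \<sigma>" for f
  proof -
    have "pmult f (monomial 1 (\<lambda>_. 0)) = f" by (simp add: pmult_monomial_right fun_eq_iff)
    then show ?thesis using assms that unfolding semiring_ideal_def by metis
  qed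
  then show ?thesis using assms(1) unfolding semiring_ideal_def by blast
qed

lemma nil_coeff_ideal_in_spec:
  assumes idem: "idempotent_semiring TYPE('a::comm_semiring_1)" and irr: "irreducible_semiring TYPE('a)"
  shows "(nil_coeff_ideal \<sigma> :: ('n::finite, 'a) lpoly set) \<in> spec (coord \<sigma>)"
  unfolding spec_def prime_ideal_def mem_Collect_eq
proof (intro conjI ballI impI)
  have "monomial (1::'a) (\<lambda>_. 0) \<in> coord \<sigma>" by (rule monomial_in_coord[OF zero_in_dual_monoid])
  moreover have "monomial (1::'a) (\<lambda>_. 0) \<notin> nil_coeff_ideal \<sigma>"
    unfolding nil_coeff_ideal_def by (auto dest: spec[of _ "\<lambda>_. 0"] simp: monomial_def)
  ultimately show "(nil_coeff_ideal \<sigma> :: ('n, 'a) lpoly set) \<noteq> coord \<sigma>" by blast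
next
  fix a b :: "('n, 'a) lpoly"
  assume a: "a \<in> coord \<sigma>" and b: "b \<in> coord \<sigma>" and ab: "pmult a b \<in> nil_coeff_ideal \<sigma>"
  note fin = coord_finite_supp[OF a] coord_finite_supp[OF b]
  have "nilpotent_elem (augmentation (pmult a b))"
    using ab nilpotent_elem_augmentation_iff[OF idem coord_finite_supp[OF pmult_in_coord[OF a b]]]
    unfolding nil_coeff_ideal_def by blast
  then have "nilpotent_elem (augmentation a) \<or> nilpotent_elem (augmentation b)"
    using irr unfolding augmentation_pmult[OF fin] irreducible_semiring_def by blast
  then show "a \<in> nil_coeff_ideal \<sigma> \<or> b \<in> nil_coeff_ideal \<sigma>"
    using a b unfolding nil_coeff_ideal_def nilpotent_elem_augmentation_iff[OF idem fin(1)]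
      nilpotent_elem_augmentation_iff[OF idem fin(2)] by blast
qed (rule semiring_ideal_nil_coeff_ideal)

lemma monomial_nilpotent_in_prime:
  assumes Q: "Q \<in> spec (coord \<sigma>)" and p: "p \<in> dual_monoid \<sigma>" and a: "nilpotent_elem a"
  shows "monomial a p \<in> (Q :: ('n::finite, 'a::comm_semiring_1) lpoly set)"
proof -
  have ideal: "semiring_ideal (coord \<sigma>) Q"
    and prime: "\<And>x y. x \<in> coord \<sigma> \<Longrightarrow> y \<in> coord \<sigma> \<Longrightarrow> pmult x y \<in> Q \<Longrightarrow> x \<in> Q \<or> y \<in> Q"
    and proper: "Q \<noteq> coord \<sigma>"
    using Q unfolding spec_def prime_ideal_def by auto
  define mult_p where "mult_p j = (\<lambda>i. int j * p i)" for j :: nat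
  have mult_p_in: "mult_p j \<in> dual_monoid \<sigma>" for j
  proof (induction j)
    case 0
    then show ?case by (simp add: mult_p_def zero_in_dual_monoid)
  next
    case (Suc j)
    have "mult_p (Suc j) = (\<lambda>i. p i + mult_p j i)" by (simp add: mult_p_def algebra_simps)
    then show ?case using add_in_dual_monoid[OF p Suc] by simp
  qed
  have "monomial a p \<in> Q" if "monomial (a ^ j) (mult_p j) \<in> Q" for j
    using that
  proof (induction j)
    case 0
    then show ?case using proper monomial_1_in_ideal_imp_eq[OF ideal] by (simp add: mult_p_def)
  next
    case (Suc j)
    have "monomial (a ^ Suc j) (mult_p (Suc j)) = pmult (monomial a p) (monomial (a ^ j) (mult_p j))"
    proof
      fix m
      have "(\<lambda>i. m i - p i) = mult_p j \<longleftrightarrow> m = mult_p (Suc j)"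
        by (auto simp: fun_eq_iff mult_p_def algebra_simps)
      then show "monomial (a ^ Suc j) (mult_p (Suc j)) m = pmult (monomial a p) (monomial (a ^ j) (mult_p j)) m"
        unfolding pmult_monomial_left by (simp add: monomial_def)
    qed
    then show ?case
      using Suc prime[OF monomial_in_coord[OF p] monomial_in_coord[OF mult_p_in]] by metis
  qed
  moreover obtain k where "a ^ k = 0" using a unfolding nilpotent_elem_def by blast
  then have "monomial (a ^ k) (mult_p k) \<in> Q"
    using ideal unfolding semiring_ideal_def by simp
  ultimately show ?thesis by blast
qed

lemma nil_coeff_ideal_subset_prime:
  assumes Q: "Q \<in> spec (coord \<sigma>)"
  shows "nil_coeff_ideal \<sigma> \<subseteq> (Q :: ('n::finite, 'a::comm_semiring_1) lpoly set)"
proof -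
  have ideal: "semiring_ideal (coord \<sigma>) Q" using Q unfolding spec_def prime_ideal_def by auto
  have "f \<in> Q" if "finite F" "supp f \<subseteq> F" "f \<in> nil_coeff_ideal \<sigma>" for F f
    using that
  proof (induction F arbitrary: f rule: finite_induct)
    case empty
    then have "f = (\<lambda>_. 0)" unfolding supp_def by auto
    then show ?case using ideal unfolding semiring_ideal_def by simp
  next
    case (insert x F)
    then have f: "f \<in> coord \<sigma>" "\<And>m. nilpotent_elem (f m)" unfolding nil_coeff_ideal_def by auto
    have "supp (f(x := 0)) \<subseteq> supp f" unfolding supp_def by auto
    then have "f(x := 0) \<in> nil_coeff_ideal \<sigma>"
      using f finite_subset unfolding nil_coeff_ideal_def coord_iff by auto
    moreover have "supp (f(x := 0)) \<subseteq> F" using insert.prems(1) unfolding supp_def by auto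
    ultimately have rest: "f(x := 0) \<in> Q" using insert.IH by blast
    have head: "monomial (f x) x \<in> Q"
    proof (cases "f x = 0")
      case True
      then show ?thesis using ideal unfolding semiring_ideal_def by simp
    next
      case False
      then have "x \<in> dual_monoid \<sigma>" using f(1) unfolding coord_iff supp_def by auto
      then show ?thesis using monomial_nilpotent_in_prime[OF Q] f(2) by blast
    qed
    have "f = padd (monomial (f x) x) (f(x := 0))" by (auto simp: padd_def monomial_def)
    then show ?case using ideal head rest unfolding semiring_ideal_def by metis
  qed
  then show ?thesis unfolding nil_coeff_ideal_def using coord_finite_supp by blast
qed


section \<open>Interior lattice points of the dual of a strongly convex cone\<close>

lemma pair_lat_lat: "pair (lat w) (lat g) = (\<Sum>i\<in>UNIV. real_of_int (w i) * real_of_int (g i))"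
  unfolding pair_def lat_def by simp

lemma lat_in_cone_gen: "finite G \<Longrightarrow> g \<in> G \<Longrightarrow> lat g \<in> cone_gen G"
  unfolding cone_gen_def lat_def
  by (intro CollectI exI[of _ "\<lambda>h. if h = g then 1 else 0"]) (simp add: if_distrib[of "\<lambda>c. c * _"] sum.delta cong: if_cong)

lemma uminus_lat_in_cone_gen:
  assumes fin: "finite G" and g0: "g0 \<in> G" and l_nonneg: "\<forall>g\<in>G. l g \<ge> 0" and l_pos: "l g0 > 0"
    and balanced: "\<And>i. (\<Sum>g\<in>G. l g * real_of_int (g i)) = 0"
  shows "(\<lambda>i. - lat g0 i) \<in> cone_gen G"
  unfolding cone_gen_def mem_Collect_eq
proof (intro exI[of _ "\<lambda>g. if g = g0 then 0 else l g / l g0"] conjI ext)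
  show "\<forall>g\<in>G. 0 \<le> (if g = g0 then 0 else l g / l g0)" using l_nonneg l_pos by simp
  fix i
  have rest: "(\<Sum>g\<in>G - {g0}. l g * real_of_int (g i)) = - (l g0 * real_of_int (g0 i))"
    using balanced[of i] by (simp add: sum.remove[OF fin g0] eq_neg_iff_add_eq_0 add.commute)
  have "(\<Sum>g\<in>G. (if g = g0 then 0 else l g / l g0) * real_of_int (g i))
      = (\<Sum>g\<in>G - {g0}. l g * real_of_int (g i)) / l g0"
    by (simp add: sum.remove[OF fin g0] sum_divide_distrib)
  then show "- lat g0 i = (\<Sum>g\<in>G. (if g = g0 then 0 else l g / l g0) * real_of_int (g i))"
    unfolding rest using l_pos by (simp add: lat_def)
qed

text \<open>Gordan's lemma: separate \<open>0\<close> from the convex hull of the nonzero generators.\<close>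
lemma strongly_convex_cone_gen_imp_pos_functional:
  fixes G :: "('n::finite \<Rightarrow> int) set"
  assumes fin: "finite G" and sc: "strongly_convex (cone_gen G)"
  shows "\<exists>c. \<forall>g\<in>G. g \<noteq> (\<lambda>_. 0) \<longrightarrow> pair c (lat g) > 0"
proof -
  define G1 where "G1 = G - {\<lambda>_. 0}"
  define \<phi> :: "('n \<Rightarrow> int) \<Rightarrow> real^'n" where "\<phi> g = (\<chi> i. real_of_int (g i))" for g
  have fin1: "finite G1" using fin unfolding G1_def by simp
  have inj: "inj_on \<phi> G1" unfolding inj_on_def \<phi>_def by (auto simp: vec_eq_iff fun_eq_iff)
  define S where "S = convex hull (\<phi> ` G1)"
  have "0 \<notin> S"
  proof
    assume "0 \<in> S"
    then obtain u where u_nonneg: "\<forall>x\<in>\<phi> ` G1. 0 \<le> u x" and u_sum: "sum u (\<phi> ` G1) = 1"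
      and u_comb: "(\<Sum>x\<in>\<phi> ` G1. u x *\<^sub>R x) = 0"
      unfolding S_def convex_hull_finite[OF finite_imageI[OF fin1]] by auto
    define l where "l g = (if g \<in> G1 then u (\<phi> g) else 0)" for g
    have l_nonneg: "\<forall>g\<in>G. l g \<ge> 0" using u_nonneg by (simp add: l_def)
    have "sum l G1 = 1" using u_sum by (simp add: l_def sum.reindex[OF inj])
    have "\<exists>g0\<in>G1. l g0 > 0"
    proof (rule ccontr)
      assume "\<not> (\<exists>g0\<in>G1. l g0 > 0)"
      then have "sum l G1 \<le> 0" by (intro sum_nonpos) (simp add: not_less)
      with \<open>sum l G1 = 1\<close> show False by simp
    qed
    then obtain g0 where g0: "g0 \<in> G1" "l g0 > 0" by blast
    have "(\<Sum>g\<in>G. l g * real_of_int (g i)) = 0" for i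
    proof -
      have "(\<Sum>g\<in>G. l g * real_of_int (g i)) = (\<Sum>g\<in>G1. l g * real_of_int (g i))"
        by (rule sum.mono_neutral_right[OF fin]) (auto simp: G1_def l_def)
      also have "\<dots> = (\<Sum>g\<in>G1. u (\<phi> g) * \<phi> g $ i)"
        by (rule sum.cong) (simp_all add: l_def \<phi>_def)
      also have "\<dots> = (\<Sum>x\<in>\<phi> ` G1. u x *\<^sub>R x) $ i"
        by (simp add: sum.reindex[OF inj])
      finally show ?thesis using u_comb by simp
    qed
    with g0 have "(\<lambda>i. - lat g0 i) \<in> cone_gen G"
      by (intro uminus_lat_in_cone_gen[OF fin _ l_nonneg]) (simp_all add: G1_def)
    moreover have "lat g0 \<in> cone_gen G" using g0 by (intro lat_in_cone_gen[OF fin]) (simp add: G1_def)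
    ultimately have "lat g0 = (\<lambda>_. 0)" using sc unfolding strongly_convex_def by blast
    then show False using g0 unfolding G1_def lat_def by (auto simp: fun_eq_iff)
  qed
  moreover have "convex S" unfolding S_def by (rule convex_convex_hull)
  moreover have "closed S"
    unfolding S_def by (intro compact_imp_closed compact_convex_hull finite_imp_compact finite_imageI fin1)
  ultimately obtain a b where "0 < b" "\<forall>x\<in>S. b < a \<bullet> x"
    using separating_hyperplane_closed_0 by blast
  moreover have "\<phi> g \<in> S" if "g \<in> G1" for g
    unfolding S_def by (rule hull_inc) (use that in blast)
  ultimately have "a \<bullet> \<phi> g > 0" if "g \<in> G1" for g
    using that by force
  moreover have "a \<bullet> \<phi> g = pair (\<lambda>i. a $ i) (lat g)" for g
    unfolding inner_vec_def pair_def lat_def \<phi>_def by simp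
  ultimately show ?thesis unfolding G1_def by (intro exI[of _ "\<lambda>i. a $ i"]) auto
qed

lemma floor_mult_ge: "real_of_int \<lfloor>y\<rfloor> * z \<ge> y * z - \<bar>z\<bar>"
proof -
  have "(y - \<lfloor>y\<rfloor>) * z \<le> (y - \<lfloor>y\<rfloor>) * \<bar>z\<bar>" by (simp add: mult_left_mono)
  also have "\<dots> \<le> 1 * \<bar>z\<bar>" by (intro mult_right_mono) linarith+
  finally show ?thesis by (simp add: algebra_simps)
qed

text \<open>Round a large multiple of the real functional.\<close>
lemma pos_functional_imp_lattice_functional:
  fixes G :: "('n::finite \<Rightarrow> int) set"
  assumes fin: "finite G" and c: "\<forall>g\<in>G. g \<noteq> (\<lambda>_. 0) \<longrightarrow> pair c (lat g) > 0"
  shows "\<exists>w. \<forall>g\<in>G. g \<noteq> (\<lambda>_. 0) \<longrightarrow> pair (lat w) (lat g) \<ge> 1"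
proof -
  define G1 where "G1 = G - {\<lambda>_. 0}"
  define t where "t g = (1 + (\<Sum>i\<in>UNIV. \<bar>real_of_int (g i)\<bar>)) / pair c (lat g)" for g
  define K where "K = (\<Sum>g\<in>G1. t g)"
  define w where "w i = \<lfloor>K * c i\<rfloor>" for i
  have "pair (lat w) (lat g) \<ge> 1" if g: "g \<in> G1" for g
  proof -
    have pos: "pair c (lat g) > 0" using c g unfolding G1_def by blast
    have "t g \<le> K"
      unfolding K_def using fin c pos by (intro member_le_sum[OF g]) (auto simp: G1_def t_def)
    then have "1 + (\<Sum>i\<in>UNIV. \<bar>real_of_int (g i)\<bar>) \<le> K * pair c (lat g)"
      using pos by (simp add: t_def divide_le_eq)
    moreover have "pair (lat w) (lat g) \<ge> (\<Sum>i\<in>UNIV. K * c i * real_of_int (g i) - \<bar>real_of_int (g i)\<bar>)"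
      unfolding pair_lat_lat w_def by (intro sum_mono floor_mult_ge)
    moreover have "(\<Sum>i\<in>UNIV. K * c i * real_of_int (g i)) = K * pair c (lat g)"
      unfolding pair_def lat_def by (simp add: sum_distrib_left mult.assoc)
    ultimately show ?thesis by (simp add: sum_subtractf)
  qed
  then show ?thesis unfolding G1_def by blast
qed

lemma in_dual_cone_cone_genI:
  assumes "finite G" and "\<And>g. g \<in> G \<Longrightarrow> pair x (lat g) \<ge> 0"
  shows "x \<in> dual_cone (cone_gen G)"
  unfolding dual_cone_def mem_Collect_eq
proof
  fix v assume "v \<in> cone_gen G"
  then obtain c where c: "\<forall>g\<in>G. c g \<ge> 0" and v: "v = (\<lambda>i. \<Sum>g\<in>G. c g * real_of_int (g i))"
    unfolding cone_gen_def by auto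
  have "pair x v = (\<Sum>g\<in>G. c g * pair x (lat g))"
    unfolding pair_def lat_def v sum_distrib_left by (subst sum.swap) (simp add: algebra_simps)
  also have "\<dots> \<ge> 0" using c assms(2) by (intro sum_nonneg mult_nonneg_nonneg) auto
  finally show "pair x v \<ge> 0" .
qed

text \<open>Take a large multiple of an interior lattice point of the dual cone.\<close>
lemma exists_shift_into_dual_monoid:
  fixes \<tau> :: "('n::finite \<Rightarrow> real) set"
  assumes "rat_poly_cone \<tau>" "strongly_convex \<tau>" "finite F"
  shows "\<exists>u \<in> dual_monoid \<tau>. \<forall>m\<in>F. (\<lambda>i. u i + m i) \<in> dual_monoid \<tau>"
proof -
  obtain G where fin: "finite G" and \<tau>: "\<tau> = cone_gen G" using assms(1) unfolding rat_poly_cone_def by blast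
  obtain w where w: "\<forall>g\<in>G. g \<noteq> (\<lambda>_. 0) \<longrightarrow> pair (lat w) (lat g) \<ge> 1"
    using strongly_convex_cone_gen_imp_pos_functional[OF fin] pos_functional_imp_lattice_functional[OF fin]
      assms(2) \<tau> by blast
  define n where "n = \<lceil>\<Sum>m\<in>F. \<Sum>g\<in>G. \<bar>pair (lat m) (lat g)\<bar>\<rceil>"
  define u where "u = (\<lambda>i. n * w i)"
  have bound: "\<bar>pair (lat m) (lat g)\<bar> \<le> n" if "m \<in> F" "g \<in> G" for m g
  proof -
    have "\<bar>pair (lat m) (lat g)\<bar> \<le> (\<Sum>g\<in>G. \<bar>pair (lat m) (lat g)\<bar>)"
      using fin that by (intro member_le_sum) auto
    also have "\<dots> \<le> (\<Sum>m\<in>F. \<Sum>g\<in>G. \<bar>pair (lat m) (lat g)\<bar>)"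
      using assms(3) that by (intro member_le_sum[where f = "\<lambda>m. \<Sum>g\<in>G. \<bar>pair (lat m) (lat g)\<bar>"]) (auto intro: sum_nonneg)
    finally show ?thesis unfolding n_def by linarith
  qed
  have "0 \<le> (\<Sum>m\<in>F. \<Sum>g\<in>G. \<bar>pair (lat m) (lat g)\<bar>)" by (intro sum_nonneg) auto
  then have n_nonneg: "n \<ge> 0" unfolding n_def by simp
  have pair_u: "pair (lat u) (lat g) = n * pair (lat w) (lat g)" for g
    unfolding pair_lat_lat u_def by (simp add: sum_distrib_left algebra_simps)
  have u_ge: "pair (lat u) (lat g) \<ge> n" if "g \<in> G" "g \<noteq> (\<lambda>_. 0)" for g
    using w that n_nonneg unfolding pair_u by (metis mult.right_neutral mult_left_mono of_int_0_le_iff)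
  have pair_0: "pair x (lat (\<lambda>_. 0)) = 0" for x :: "'n \<Rightarrow> real" unfolding pair_def lat_def by simp
  have "u \<in> dual_monoid \<tau>"
    unfolding dual_monoid_def \<tau> mem_Collect_eq
  proof (rule in_dual_cone_cone_genI[OF fin])
    fix g assume "g \<in> G"
    then show "pair (lat u) (lat g) \<ge> 0"
      using u_ge[of g] n_nonneg by (cases "g = (\<lambda>_. 0)") (auto simp: pair_0)
  qed
  moreover have "(\<lambda>i. u i + m i) \<in> dual_monoid \<tau>" if "m \<in> F" for m
    unfolding dual_monoid_def \<tau> mem_Collect_eq
  proof (rule in_dual_cone_cone_genI[OF fin])
    fix g assume "g \<in> G"
    then show "pair (lat (\<lambda>i. u i + m i)) (lat g) \<ge> 0"
      using u_ge[of g] bound[OF that, of g] unfolding pair_lat_add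
      by (cases "g = (\<lambda>_. 0)") (auto simp: pair_0 abs_le_iff)
  qed
  ultimately show ?thesis by blast
qed

section \<open>The generic point of the toric scheme\<close>

lemma prime_restricting_to_nil_coeff_ideal_eq:
  fixes \<tau> \<sigma>' :: "('n::finite \<Rightarrow> real) set"
  assumes \<tau>: "rat_poly_cone \<tau>" "strongly_convex \<tau>" and "\<sigma>' \<subseteq> \<tau>"
    and P': "P' \<in> spec (coord \<sigma>')" and restrict: "P' \<inter> coord \<tau> = nil_coeff_ideal \<tau>"
  shows "P' = (nil_coeff_ideal \<sigma>' :: ('n, 'a::comm_semiring_1) lpoly set)"
proof
  show "nil_coeff_ideal \<sigma>' \<subseteq> P'" by (rule nil_coeff_ideal_subset_prime[OF P'])
  show "P' \<subseteq> nil_coeff_ideal \<sigma>'"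
  proof
    fix f assume f: "f \<in> P'"
    have ideal: "semiring_ideal (coord \<sigma>') P'" using P' unfolding spec_def prime_ideal_def by auto
    then have fc: "f \<in> coord \<sigma>'" using f unfolding semiring_ideal_def by blast
    obtain u where u: "u \<in> dual_monoid \<tau>" and shift: "\<forall>m\<in>supp f. (\<lambda>i. u i + m i) \<in> dual_monoid \<tau>"
      using exists_shift_into_dual_monoid[OF \<tau> coord_finite_supp[OF fc]] by blast
    define h where "h = pmult (monomial 1 u) f"
    have h: "h m = f (\<lambda>i. m i - u i)" for m unfolding h_def pmult_monomial_left by simp
    have "monomial 1 u \<in> coord \<sigma>'" using coord_antimono[OF \<open>\<sigma>' \<subseteq> \<tau>\<close>] monomial_in_coord[OF u] by blast
    then have "h \<in> P'" using ideal f unfolding h_def semiring_ideal_def by blast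
    moreover have "supp h \<subseteq> (\<lambda>m i. u i + m i) ` supp f"
    proof
      fix m assume "m \<in> supp h"
      then have "(\<lambda>i. m i - u i) \<in> supp f" unfolding supp_def h by simp
      then show "m \<in> (\<lambda>m i. u i + m i) ` supp f" by (rule rev_image_eqI) simp
    qed
    then have "h \<in> coord \<tau>"
      using shift coord_finite_supp[OF fc] finite_subset unfolding coord_iff by blast
    ultimately have "h \<in> nil_coeff_ideal \<tau>" using restrict by blast
    then have "nilpotent_elem (h (\<lambda>i. u i + m i))" for m unfolding nil_coeff_ideal_def by blast
    then have "nilpotent_elem (f m)" for m by (simp add: h)
    then show "f \<in> nil_coeff_ideal \<sigma>'" using fc unfolding nil_coeff_ideal_def by blast
  qed
qed

definition generic_point :: "'a::comm_semiring_1 itself \<Rightarrow> ('n::finite \<Rightarrow> real) set set \<Rightarrow>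
    (('n \<Rightarrow> real) set \<times> ('n, 'a) lpoly set) set" where
  "generic_point R \<Delta> = (\<lambda>\<sigma>. (\<sigma>, nil_coeff_ideal \<sigma>)) ` \<Delta>"

lemma glue_rel_class_eq_generic_point:
  fixes \<Delta> :: "('n::finite \<Rightarrow> real) set set"
  assumes fan: "fan \<Delta>" and idem: "idempotent_semiring TYPE('a::comm_semiring_1)"
    and irr: "irreducible_semiring TYPE('a)" and \<tau>: "\<tau> \<in> \<Delta>"
  shows "glue_rel TYPE('a) \<Delta> `` {(\<tau>, nil_coeff_ideal \<tau>)} = generic_point TYPE('a) \<Delta>"
proof (intro equalityI subsetI)
  fix x assume "x \<in> generic_point TYPE('a) \<Delta>"
  then obtain \<sigma> where \<sigma>: "\<sigma> \<in> \<Delta>" and x: "x = (\<sigma>, nil_coeff_ideal \<sigma>)"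
    unfolding generic_point_def by blast
  have "nil_coeff_ideal \<tau> = nil_coeff_ideal (\<tau> \<inter> \<sigma>) \<inter> (coord \<tau> :: ('n, 'a) lpoly set)"
    "nil_coeff_ideal \<sigma> = nil_coeff_ideal (\<tau> \<inter> \<sigma>) \<inter> (coord \<sigma> :: ('n, 'a) lpoly set)"
    by (simp_all add: nil_coeff_ideal_restrict)
  moreover note nil_coeff_ideal_in_spec[OF idem irr, of \<tau>] nil_coeff_ideal_in_spec[OF idem irr, of \<sigma>]
    nil_coeff_ideal_in_spec[OF idem irr, of "\<tau> \<inter> \<sigma>"]
  ultimately show "x \<in> glue_rel TYPE('a) \<Delta> `` {(\<tau>, nil_coeff_ideal \<tau>)}"
    unfolding x glue_rel_def using \<tau> \<sigma> by blast
next
  fix x assume "x \<in> glue_rel TYPE('a) \<Delta> `` {(\<tau>, nil_coeff_ideal \<tau>)}"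
  then obtain \<sigma> P where x: "x = (\<sigma>, P)"
    and rel: "((\<tau>, nil_coeff_ideal \<tau>), (\<sigma>, P)) \<in> glue_rel TYPE('a) \<Delta>"
    by (cases x) auto
  from rel obtain P' :: "('n, 'a) lpoly set" where \<sigma>: "\<sigma> \<in> \<Delta>"
    and P': "P' \<in> spec (coord (\<tau> \<inter> \<sigma>))" "nil_coeff_ideal \<tau> = P' \<inter> coord \<tau>" and P: "P = P' \<inter> coord \<sigma>"
    unfolding glue_rel_def by blast
  have "rat_poly_cone \<tau>" "strongly_convex \<tau>" using fan \<tau> unfolding fan_def by blast+
  then have "P' = nil_coeff_ideal (\<tau> \<inter> \<sigma>)"
    by (rule prime_restricting_to_nil_coeff_ideal_eq[OF _ _ Int_lower1 P'(1) P'(2)[symmetric]])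
  then have "P = nil_coeff_ideal \<sigma>" unfolding P by (simp add: nil_coeff_ideal_restrict)
  then show "x \<in> generic_point TYPE('a) \<Delta>" unfolding x generic_point_def using \<sigma> by blast
qed

lemma generic_point_in_toric_points:
  fixes \<Delta> :: "('n::finite \<Rightarrow> real) set set"
  assumes fan: "fan \<Delta>" and idem: "idempotent_semiring TYPE('a::comm_semiring_1)"
    and irr: "irreducible_semiring TYPE('a)"
  shows "generic_point TYPE('a) \<Delta> \<in> toric_points TYPE('a) \<Delta>"
proof -
  obtain \<tau> where \<tau>: "\<tau> \<in> \<Delta>" using fan unfolding fan_def by blast
  then have "(\<tau>, nil_coeff_ideal \<tau>) \<in> (SIGMA \<sigma>:\<Delta>. spec (coord \<sigma> :: ('n, 'a) lpoly set))"
    using nil_coeff_ideal_in_spec[OF idem irr] by blast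
  then show ?thesis
    unfolding toric_points_def glue_rel_class_eq_generic_point[OF assms \<tau>, symmetric] by (rule quotientI)
qed

lemma zariski_open_generalization:
  "zariski_open A U \<Longrightarrow> Q \<in> U \<Longrightarrow> P \<in> spec A \<Longrightarrow> P \<subseteq> Q \<Longrightarrow> P \<in> U"
  unfolding zariski_open_def by blast

lemma generic_point_in_toric_open:
  fixes \<Delta> :: "('n::finite \<Rightarrow> real) set set"
  assumes fan: "fan \<Delta>" and idem: "idempotent_semiring TYPE('a::comm_semiring_1)"
    and irr: "irreducible_semiring TYPE('a)"
    and U: "toric_open TYPE('a) \<Delta> U" "U \<noteq> {}"
  shows "generic_point TYPE('a) \<Delta> \<in> U"
proof -
  obtain c where c: "c \<in> U" using U(2) by blast
  then have "c \<in> toric_points TYPE('a) \<Delta>" using U(1) unfolding toric_open_def by blast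
  then obtain \<tau> Q where \<tau>: "\<tau> \<in> \<Delta>" and Q: "Q \<in> spec (coord \<tau> :: ('n, 'a) lpoly set)"
    and c_eq: "c = glue_rel TYPE('a) \<Delta> `` {(\<tau>, Q)}"
    unfolding toric_points_def by (auto elim: quotientE)
  let ?U\<tau> = "{P \<in> spec (coord \<tau>). glue_rel TYPE('a) \<Delta> `` {(\<tau>, P)} \<in> U}"
  have "zariski_open (coord \<tau>) ?U\<tau>" using U(1) \<tau> unfolding toric_open_def by blast
  moreover have "Q \<in> ?U\<tau>" using Q c c_eq by blast
  ultimately have "nil_coeff_ideal \<tau> \<in> ?U\<tau>"
    using nil_coeff_ideal_in_spec[OF idem irr] nil_coeff_ideal_subset_prime[OF Q]
    by (rule zariski_open_generalization)
  then show ?thesis using glue_rel_class_eq_generic_point[OF assms(1-3) \<tau>] by simp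
qed

lemma irreducible_space_if_generic_point:
  assumes "x \<in> X" and "\<And>U. opn U \<Longrightarrow> U \<noteq> {} \<Longrightarrow> x \<in> U"
  shows "irreducible_space X opn"
  unfolding irreducible_space_def
proof (intro conjI allI impI)
  show "X \<noteq> {}" using assms(1) by blast
  fix U V assume "opn U \<and> opn V \<and> X - U \<union> (X - V) = X"
  then show "X - U = X \<or> X - V = X" using assms by (metis Diff_empty Diff_iff UnE)
qed

theorem proposition5p14:
  fixes \<Delta> :: "('n::finite \<Rightarrow> real) set set"
  assumes "fan \<Delta>"
    and "idempotent_semiring TYPE('a::comm_semiring_1)"
    and "irreducible_semiring TYPE('a)"
  shows "toric_scheme_irreducible TYPE('a) \<Delta>"
  unfolding toric_scheme_irreducible_def
  using generic_point_in_toric_points[OF assms] generic_point_in_toric_open[OF assms]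
  by (rule irreducible_space_if_generic_point)

end
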